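(* Let $P$ be an infinite field and $W(X)$ the free associative (unital) algebra over $P$ on a finite set $X=\{x_1,\ldots,x_n\}$. Let $\mu:W(X)\to W(X)$ be a bijection generating an automorphism $\tau$ of the semigroup $\mathrm{End}(W(X))$ (i.e. $\tau(s)=\mu s\mu^{-1}$ for all $s$), such that $\mu(a)=a$ for all $a\in P$ and $\mu(x_i)=x_i$ for all $i$. Then either $\mu(uv)=\mu(u)\mu(v)$ for all $u,v\in W(X)$, or $\mu(uv)=\mu(v)\mu(u)$ for all $u,v\in W(X)$.
   Context: $\mathrm{End}(W(X))$ is the semigroup of all $P$-algebra endomorphisms of $W(X)$. *)

theory Defs
  imports Main
begin

text \<open>The free associative unital algebra W(X) over a field 'a on X = {x_0,...,x_(n-1)}
  is modelled as finitely supported functions from words (lists of indices < n) to 'a.\<close>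

type_synonym 'a walg = "nat list \<Rightarrow> 'a"

definition W :: "nat \<Rightarrow> ('a::field) walg set" where
  "W n = {f. finite {w. f w \<noteq> 0} \<and> (\<forall>w. f w \<noteq> 0 \<longrightarrow> set w \<subseteq> {..<n})}"

definition wadd :: "('a::field) walg \<Rightarrow> 'a walg \<Rightarrow> 'a walg" where
  "wadd f g = (\<lambda>w. f w + g w)"

definition wsmult :: "'a::field \<Rightarrow> 'a walg \<Rightarrow> 'a walg" where
  "wsmult c f = (\<lambda>w. c * f w)"

definition wmult :: "('a::field) walg \<Rightarrow> 'a walg \<Rightarrow> 'a walg" where
  "wmult f g = (\<lambda>w. \<Sum>k\<le>length w. f (take k w) * g (drop k w))"

definition wconst :: "'a::field \<Rightarrow> 'a walg" where
  "wconst a = (\<lambda>w. if w = [] then a else 0)"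

definition wvar :: "nat \<Rightarrow> ('a::field) walg" where
  "wvar i = (\<lambda>w. if w = [i] then 1 else 0)"

definition WEnd :: "nat \<Rightarrow> (('a::field) walg \<Rightarrow> 'a walg) set" where
  "WEnd n = {s. (\<forall>f\<in>W n. s f \<in> W n)
     \<and> (\<forall>f\<in>W n. \<forall>g\<in>W n. s (wadd f g) = wadd (s f) (s g))
     \<and> (\<forall>c. \<forall>f\<in>W n. s (wsmult c f) = wsmult c (s f))
     \<and> (\<forall>f\<in>W n. \<forall>g\<in>W n. s (wmult f g) = wmult (s f) (s g))
     \<and> s (wconst 1) = wconst 1}"

end

theory Submission imports Defs "HOL-Computational_Algebra.Polynomial" begin

(* Conjugation by \<mu> turns the substitution endomorphism x_i \<mapsto> u_i into x_i \<mapsto> \<mu>(u_i), so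
   \<mu>(s f) = s'(\<mu> f) for every substitution s.  Substituting scalars shows that \<mu> preserves
   evaluation at scalars; as P is infinite, \<mu> therefore fixes every element involving x_0 only
   (for n \<le> 1 this is all of W(X)), hence every c x_i, and so \<mu> commutes with rescaling a single
   variable.  This torus action forces t = \<mu>(x_0 x_1) to have degree one in x_0 and in x_1, i.e.
   t = \<beta> x_0 x_1 + \<gamma> x_1 x_0, and substituting u, v for x_0, x_1 yields
   \<mu>(u v) = \<beta> \<mu>(u) \<mu>(v) + \<gamma> \<mu>(v) \<mu>(u).  Then u = v = 1 gives \<beta> + \<gamma> = 1, and computing
   \<mu>(x_0 x_1 x_1) in two ways gives \<beta>\<^sup>2 = \<beta>. *)

section \<open>Words and the operations of W(X)\<close>

definition wsum :: "'b set \<Rightarrow> ('b \<Rightarrow> ('a::field) walg) \<Rightarrow> 'a walg" where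
  "wsum S F = (\<lambda>w. \<Sum>i\<in>S. F i w)"

definition wword :: "nat list \<Rightarrow> ('a::field) walg" where
  "wword v = (\<lambda>w. if w = v then 1 else 0)"

definition supp :: "('a::field) walg \<Rightarrow> nat list set" where
  "supp f = {w. f w \<noteq> 0}"

definition splittings :: "nat list \<Rightarrow> (nat list \<times> nat list) set" where
  "splittings x = {(a, b). a @ b = x}"

lemma splittings_eq_image: "splittings x = (\<lambda>k. (take k x, drop k x)) ` {..length x}"
proof
  show "splittings x \<subseteq> (\<lambda>k. (take k x, drop k x)) ` {..length x}"
  proof
    fix p assume "p \<in> splittings x"
    then obtain a b where "p = (a, b)" "a @ b = x" by (auto simp: splittings_def)
    then show "p \<in> (\<lambda>k. (take k x, drop k x)) ` {..length x}"
      by (intro image_eqI[where x="length a"]) auto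
  qed
qed (auto simp: splittings_def)

lemma finite_splittings [simp]: "finite (splittings x)"
  by (simp add: splittings_eq_image)

lemma wmult_splittings: "wmult f g x = (\<Sum>p\<in>splittings x. f (fst p) * g (snd p))"
proof -
  have "inj_on (\<lambda>k. (take k x, drop k x)) {..length x}"
    by (rule inj_onI) (metis Pair_inject atMost_iff length_take min.absorb2)
  then show ?thesis
    unfolding splittings_eq_image wmult_def by (simp add: sum.reindex)
qed

lemma wmult_assoc: "wmult (wmult f g) h = wmult f (wmult g h)"
proof
  fix x
  have "wmult (wmult f g) h x
      = (\<Sum>p\<in>splittings x. \<Sum>q\<in>splittings (fst p). f (fst q) * g (snd q) * h (snd p))"
    by (simp add: wmult_splittings sum_distrib_right)
  also have "\<dots> = (\<Sum>pq\<in>Sigma (splittings x) (\<lambda>p. splittings (fst p)).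
                    f (fst (snd pq)) * g (snd (snd pq)) * h (snd (fst pq)))"
    by (subst sum.Sigma) (auto simp: case_prod_beta)
  also have "\<dots> = (\<Sum>t\<in>{(a, b, c). a @ b @ c = x}. f (fst t) * g (fst (snd t)) * h (snd (snd t)))"
    by (rule sum.reindex_bij_witness[where i="\<lambda>(a, b, c). ((a @ b, c), (a, b))"
          and j="\<lambda>((p, c), (a, b)). (a, b, c)"]) (auto simp: splittings_def)
  also have "\<dots> = (\<Sum>pq\<in>Sigma (splittings x) (\<lambda>p. splittings (snd p)).
                    f (fst (fst pq)) * g (fst (snd pq)) * h (snd (snd pq)))"
    by (rule sum.reindex_bij_witness[where j="\<lambda>(a, b, c). ((a, b @ c), (b, c))"
          and i="\<lambda>((a, q), (b, c)). (a, b, c)"]) (auto simp: splittings_def)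
  also have "\<dots> = (\<Sum>p\<in>splittings x. \<Sum>q\<in>splittings (snd p). f (fst p) * (g (fst q) * h (snd q)))"
    by (subst sum.Sigma) (auto simp: mult.assoc case_prod_beta)
  also have "\<dots> = wmult f (wmult g h) x"
    by (simp add: wmult_splittings sum_distrib_left)
  finally show "wmult (wmult f g) h x = wmult f (wmult g h) x" .
qed

lemma wmult_wword: "wmult (wword v) (wword w) = wword (v @ w)"
proof
  fix x
  have "wmult (wword v) (wword w) x = (\<Sum>p\<in>splittings x. if p = (v, w) then 1 else 0)"
    unfolding wmult_splittings wword_def by (intro sum.cong) auto
  also have "\<dots> = wword (v @ w) x"
    by (subst sum.delta[OF finite_splittings]) (auto simp: wword_def splittings_def)
  finally show "wmult (wword v) (wword w) x = wword (v @ w) x" .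
qed

lemma wmult_wsum_left: "wmult (wsum S F) g = wsum S (\<lambda>i. wmult (F i) g)"
  unfolding wmult_def wsum_def by (auto simp: sum_distrib_right intro!: ext sum.swap)

lemma wmult_wsum_right: "wmult g (wsum S F) = wsum S (\<lambda>i. wmult g (F i))"
  unfolding wmult_def wsum_def by (auto simp: sum_distrib_left intro!: ext sum.swap)

lemma wmult_wsmult_left: "wmult (wsmult c f) g = wsmult c (wmult f g)"
  unfolding wmult_def wsmult_def by (auto simp: sum_distrib_left mult.assoc intro!: ext)

lemma wmult_wsmult_right: "wmult f (wsmult c g) = wsmult c (wmult f g)"
  unfolding wmult_def wsmult_def by (auto simp: sum_distrib_left mult.left_commute intro!: ext)

lemma wmult_wadd_left: "wmult (wadd f g) h = wadd (wmult f h) (wmult g h)"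
  unfolding wmult_def wadd_def by (auto simp: distrib_right sum.distrib intro!: ext)

lemma wmult_wadd_right: "wmult h (wadd f g) = wadd (wmult h f) (wmult h g)"
  unfolding wmult_def wadd_def by (auto simp: distrib_left sum.distrib intro!: ext)

lemma wconst_eq_wsmult_wword: "wconst a = wsmult a (wword [])"
  by (auto simp: wconst_def wsmult_def wword_def)

lemma wvar_eq_wword: "wvar i = wword [i]"
  by (auto simp: wvar_def wword_def)

lemma wconst_one_eq_wword: "wconst 1 = wword []"
  by (auto simp: wconst_def wword_def)

lemma wmult_one_left: "wmult (wconst 1) f = f"
proof
  fix x
  have "wmult (wconst 1) f x = (\<Sum>k\<le>length x. if k = 0 then f x else 0)"
    unfolding wmult_def wconst_def by (intro sum.cong) auto
  then show "wmult (wconst 1) f x = f x" by simp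
qed

lemma wmult_one_right: "wmult f (wconst 1) = f"
proof
  fix x
  have "wmult f (wconst 1) x = (\<Sum>k\<le>length x. if k = length x then f x else 0)"
    unfolding wmult_def wconst_def by (intro sum.cong) auto
  then show "wmult f (wconst 1) x = f x" by simp
qed

lemma wsmult_one [simp]: "wsmult 1 f = f"
  by (simp add: wsmult_def)

lemma wadd_wsmult_same: "wadd (wsmult a f) (wsmult b f) = wsmult (a + b) f"
  by (simp add: wadd_def wsmult_def distrib_right)

lemma wsmult_wsmult: "wsmult a (wsmult b f) = wsmult (a * b) f"
  by (simp add: wsmult_def mult.assoc)

lemma wmult_wconst: "wmult (wconst a) (wconst c) = wconst (a * c)"
  by (simp add: wconst_eq_wsmult_wword wmult_wsmult_left wmult_wsmult_right wmult_wword
      wsmult_wsmult mult.commute)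

lemma wconst_inject: "wconst a = wconst b \<Longrightarrow> a = b"
  by (metis wconst_def)

lemma wsum_insert: "finite S \<Longrightarrow> i \<notin> S \<Longrightarrow> wsum (insert i S) F = wadd (F i) (wsum S F)"
  by (simp add: wsum_def wadd_def)

lemma wsum_cartesian:
  "wsum (A \<times> B) (\<lambda>p. F (fst p) (snd p)) = wsum A (\<lambda>a. wsum B (\<lambda>b. F a b))"
  unfolding wsum_def by (auto intro!: ext simp: sum.cartesian_product case_prod_beta)

lemma wsum_swap: "wsum A (\<lambda>a. wsum B (\<lambda>b. F a b)) = wsum B (\<lambda>b. wsum A (\<lambda>a. F a b))"
  unfolding wsum_def by (auto intro!: ext sum.swap)

lemma wsum_cong: "(\<And>i. i \<in> S \<Longrightarrow> F i = G i) \<Longrightarrow> wsum S F = wsum S G"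
  unfolding wsum_def by (auto intro!: ext sum.cong)

lemma wsmult_wsum: "wsmult c (wsum S F) = wsum S (\<lambda>i. wsmult c (F i))"
  unfolding wsum_def wsmult_def by (auto intro!: ext simp: sum_distrib_left)

lemma supp_wword: "supp (wword w) = {w}"
  by (auto simp: supp_def wword_def)

lemma supp_wsum: "supp (wsum S F) \<subseteq> (\<Union>i\<in>S. supp (F i))"
  by (auto simp: supp_def wsum_def intro: ccontr)

lemma finite_supp_wsmult: "finite (supp f) \<Longrightarrow> finite (supp (wsmult c f))"
  by (rule finite_subset[of _ "supp f"]) (auto simp: supp_def wsmult_def)

lemma finite_supp_wsum:
  "finite S \<Longrightarrow> (\<And>i. i \<in> S \<Longrightarrow> finite (supp (F i))) \<Longrightarrow> finite (supp (wsum S F))"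
  by (rule finite_subset[OF supp_wsum]) auto

lemma wword_expansion:
  assumes "finite S" "supp f \<subseteq> S"
  shows "f = wsum S (\<lambda>w. wsmult (f w) (wword w))"
proof
  fix x
  have "wsum S (\<lambda>w. wsmult (f w) (wword w)) x = (\<Sum>w\<in>S. if x = w then f w else 0)"
    unfolding wsum_def wsmult_def wword_def by (intro sum.cong) auto
  also have "\<dots> = f x" using assms by (auto simp: supp_def)
  finally show "f x = wsum S (\<lambda>w. wsmult (f w) (wword w)) x" by simp
qed

lemma wmult_expansion:
  assumes "finite (supp f)" "finite (supp g)"
  shows "wmult f g = wsum (supp f \<times> supp g)
           (\<lambda>p. wsmult (f (fst p) * g (snd p)) (wword (fst p @ snd p)))"
proof -
  have "wmult f g = wmult (wsum (supp f) (\<lambda>w. wsmult (f w) (wword w)))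
                          (wsum (supp g) (\<lambda>w. wsmult (g w) (wword w)))"
    using wword_expansion[OF assms(1) order_refl] wword_expansion[OF assms(2) order_refl] by simp
  also have "\<dots> = wsum (supp f) (\<lambda>a. wsum (supp g) (\<lambda>b. wsmult (f a * g b) (wword (a @ b))))"
    by (subst wsum_swap) (simp add: wmult_wsum_left wmult_wsum_right wmult_wsmult_left
        wmult_wsmult_right wmult_wword wsmult_wsmult mult.commute wsmult_wsum)
  also have "\<dots> = wsum (supp f \<times> supp g)
                    (\<lambda>p. wsmult (f (fst p) * g (snd p)) (wword (fst p @ snd p)))"
    by (rule wsum_cartesian[symmetric, where F="\<lambda>a b. wsmult (f a * g b) (wword (a @ b))"])
  finally show ?thesis .
qed

lemma W_iff: "f \<in> W n \<longleftrightarrow> finite (supp f) \<and> (\<forall>w\<in>supp f. set w \<subseteq> {..<n})"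
  by (auto simp: W_def supp_def)

lemma finite_supp_W: "f \<in> W n \<Longrightarrow> finite (supp f)"
  by (simp add: W_iff)

lemma W_wsmult: "f \<in> W n \<Longrightarrow> wsmult c f \<in> W n"
  unfolding W_iff by (auto simp: finite_supp_wsmult supp_def wsmult_def)

lemma W_wsum:
  assumes "finite S" "\<And>i. i \<in> S \<Longrightarrow> F i \<in> W n"
  shows "wsum S F \<in> W n"
  unfolding W_iff
proof
  show "finite (supp (wsum S F))"
    using assms by (intro finite_supp_wsum) (auto simp: W_iff)
  show "\<forall>w\<in>supp (wsum S F). set w \<subseteq> {..<n}"
    using supp_wsum assms(2) by (fastforce simp: W_iff)
qed

lemma W_wword: "set w \<subseteq> {..<n} \<Longrightarrow> wword w \<in> W n"
  by (auto simp: W_def wword_def)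

lemma W_wmult:
  assumes f: "f \<in> W n" and g: "g \<in> W n"
  shows "wmult f g \<in> W n"
  unfolding wmult_expansion[OF finite_supp_W[OF f] finite_supp_W[OF g]]
proof (rule W_wsum)
  fix p assume "p \<in> supp f \<times> supp g"
  then have "set (fst p @ snd p) \<subseteq> {..<n}" using f g by (auto simp: W_iff)
  then show "wsmult (f (fst p) * g (snd p)) (wword (fst p @ snd p)) \<in> W n"
    by (intro W_wsmult W_wword)
qed (use f g in \<open>auto simp: W_iff\<close>)

lemma W_wconst: "wconst a \<in> W n"
  by (simp add: wconst_eq_wsmult_wword W_wsmult W_wword)

lemma W_wvar: "i < n \<Longrightarrow> wvar i \<in> W n"
  by (simp add: wvar_eq_wword W_wword)

section \<open>Substitution endomorphisms\<close>

fun wprod :: "(nat \<Rightarrow> ('a::field) walg) \<Rightarrow> nat list \<Rightarrow> 'a walg" where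
  "wprod u [] = wconst 1"
| "wprod u (a # w) = wmult (u a) (wprod u w)"

lemma wprod_append: "wprod u (v @ w) = wmult (wprod u v) (wprod u w)"
  by (induction v) (simp_all add: wmult_one_left wmult_assoc)

lemma wprod_cong: "(\<And>i. i \<in> set w \<Longrightarrow> u i = u' i) \<Longrightarrow> wprod u w = wprod u' w"
  by (induction w) auto

lemma W_wprod: "(\<And>i. i < n \<Longrightarrow> u i \<in> W n) \<Longrightarrow> set w \<subseteq> {..<n} \<Longrightarrow> wprod u w \<in> W n"
  by (induction w) (auto simp: W_wconst W_wmult)

definition wsubst :: "(nat \<Rightarrow> ('a::field) walg) \<Rightarrow> 'a walg \<Rightarrow> 'a walg" where
  "wsubst u f = wsum (supp f) (\<lambda>w. wsmult (f w) (wprod u w))"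

lemma wsubst_eq_wsum:
  assumes "finite S" "supp f \<subseteq> S"
  shows "wsubst u f = wsum S (\<lambda>w. wsmult (f w) (wprod u w))"
  unfolding wsubst_def wsum_def
proof
  fix x
  show "(\<Sum>w\<in>supp f. wsmult (f w) (wprod u w) x) = (\<Sum>w\<in>S. wsmult (f w) (wprod u w) x)"
    by (rule sum.mono_neutral_left) (use assms in \<open>auto simp: supp_def wsmult_def\<close>)
qed

lemma wsubst_wadd:
  assumes "finite (supp f)" "finite (supp g)"
  shows "wsubst u (wadd f g) = wadd (wsubst u f) (wsubst u g)"
proof -
  let ?S = "supp f \<union> supp g"
  have "wsubst u (wadd f g) = wsum ?S (\<lambda>w. wsmult (wadd f g w) (wprod u w))"
    by (rule wsubst_eq_wsum) (use assms in \<open>auto simp: supp_def wadd_def\<close>)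
  moreover have "wsubst u f = wsum ?S (\<lambda>w. wsmult (f w) (wprod u w))"
    by (rule wsubst_eq_wsum) (use assms in auto)
  moreover have "wsubst u g = wsum ?S (\<lambda>w. wsmult (g w) (wprod u w))"
    by (rule wsubst_eq_wsum) (use assms in auto)
  ultimately show ?thesis
    by (simp add: wsum_def wadd_def wsmult_def distrib_right sum.distrib)
qed

lemma wsubst_wsmult:
  assumes "finite (supp f)"
  shows "wsubst u (wsmult c f) = wsmult c (wsubst u f)"
proof -
  have "wsubst u (wsmult c f) = wsum (supp f) (\<lambda>w. wsmult (wsmult c f w) (wprod u w))"
    by (rule wsubst_eq_wsum) (use assms in \<open>auto simp: supp_def wsmult_def\<close>)
  then show ?thesis
    by (simp add: wsubst_def wsum_def wsmult_def sum_distrib_left mult.assoc)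
qed

lemma wsubst_wsum:
  assumes "finite S" "\<And>i. i \<in> S \<Longrightarrow> finite (supp (F i))"
  shows "wsubst u (wsum S F) = wsum S (\<lambda>i. wsubst u (F i))"
  using assms
proof (induction S rule: finite_induct)
  case empty
  then show ?case by (simp add: wsubst_def wsum_def supp_def)
next
  case (insert i S)
  then show ?case by (simp add: wsum_insert wsubst_wadd finite_supp_wsum)
qed

lemma wsubst_wword: "wsubst u (wword w) = wprod u w"
  unfolding wsubst_def supp_wword by (simp add: wsum_def wword_def wsmult_def)

lemma wsubst_wmult:
  assumes f: "finite (supp f)" and g: "finite (supp g)"
  shows "wsubst u (wmult f g) = wmult (wsubst u f) (wsubst u g)"
proof -
  have "wsubst u (wmult f g) = wsum (supp f \<times> supp g)
          (\<lambda>p. wsubst u (wsmult (f (fst p) * g (snd p)) (wword (fst p @ snd p))))"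
    unfolding wmult_expansion[OF f g]
    by (rule wsubst_wsum) (use f g in \<open>auto simp: finite_supp_wsmult supp_wword\<close>)
  also have "\<dots> = wsum (supp f \<times> supp g)
          (\<lambda>p. wsmult (f (fst p) * g (snd p)) (wmult (wprod u (fst p)) (wprod u (snd p))))"
    by (simp add: wsubst_wsmult supp_wword wsubst_wword wprod_append)
  also have "\<dots> = wsum (supp f)
          (\<lambda>a. wsum (supp g) (\<lambda>b. wsmult (f a * g b) (wmult (wprod u a) (wprod u b))))"
    by (rule wsum_cartesian[where F="\<lambda>a b. wsmult (f a * g b) (wmult (wprod u a) (wprod u b))"])
  also have "\<dots> = wmult (wsubst u f) (wsubst u g)"
    unfolding wsubst_def
    by (subst wsum_swap) (simp add: wmult_wsum_left wmult_wsum_right wmult_wsmult_left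
        wmult_wsmult_right wsmult_wsmult mult.commute wsmult_wsum)
  finally show ?thesis .
qed

lemma wsubst_wconst: "wsubst u (wconst a) = wconst a"
  by (simp add: wconst_eq_wsmult_wword wsubst_wsmult supp_wword wsubst_wword)

lemma wsubst_wvar: "wsubst u (wvar i) = u i"
  by (simp add: wvar_eq_wword wsubst_wword wmult_one_right)

lemma wsubst_wsmult_wvar: "wsubst u (wsmult c (wvar i)) = wsmult c (u i)"
  by (simp add: wvar_eq_wword wsubst_wsmult supp_wword wsubst_wword wmult_one_right)

lemma wsubst_wword_pair: "wsubst u (wword [i, j]) = wmult (u i) (u j)"
  by (simp add: wsubst_wword wmult_one_right)

lemma wsubst_cong: "f \<in> W n \<Longrightarrow> (\<And>i. i < n \<Longrightarrow> u i = u' i) \<Longrightarrow> wsubst u f = wsubst u' f"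
  unfolding wsubst_def
  by (rule wsum_cong, rule arg_cong[where f="wsmult _"], rule wprod_cong) (auto simp: W_iff)

lemma wsubst_in_WEnd:
  assumes "\<And>i. i < n \<Longrightarrow> u i \<in> W n"
  shows "wsubst u \<in> WEnd n"
proof -
  have "wsubst u f \<in> W n" if "f \<in> W n" for f
    unfolding wsubst_def using that assms
    by (intro W_wsum W_wsmult W_wprod) (auto simp: W_iff)
  then show ?thesis
    unfolding WEnd_def
    by (auto simp: wsubst_wadd wsubst_wsmult wsubst_wmult finite_supp_W wsubst_wconst)
qed

lemma WEnd_wadd: "s \<in> WEnd n \<Longrightarrow> f \<in> W n \<Longrightarrow> g \<in> W n \<Longrightarrow> s (wadd f g) = wadd (s f) (s g)"
  by (simp add: WEnd_def)

lemma WEnd_wsmult: "s \<in> WEnd n \<Longrightarrow> f \<in> W n \<Longrightarrow> s (wsmult c f) = wsmult c (s f)"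
  by (simp add: WEnd_def)

lemma WEnd_wmult: "s \<in> WEnd n \<Longrightarrow> f \<in> W n \<Longrightarrow> g \<in> W n \<Longrightarrow> s (wmult f g) = wmult (s f) (s g)"
  by (simp add: WEnd_def)

lemma WEnd_one: "s \<in> WEnd n \<Longrightarrow> s (wconst 1) = wconst 1"
  by (simp add: WEnd_def)

lemma WEnd_zero:
  assumes "s \<in> WEnd n"
  shows "s (\<lambda>_. 0) = (\<lambda>_. 0)"
proof -
  have "(\<lambda>_. 0) = wsmult 0 (wconst 1)" by (simp add: wsmult_def)
  moreover have "s (wsmult 0 (wconst 1)) = wsmult 0 (s (wconst 1))"
    using assms W_wconst by (rule WEnd_wsmult)
  ultimately show ?thesis by (simp add: wsmult_def)
qed

lemma WEnd_wsum:
  assumes s: "s \<in> WEnd n" and "finite S" "\<And>i. i \<in> S \<Longrightarrow> F i \<in> W n"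
  shows "s (wsum S F) = wsum S (\<lambda>i. s (F i))"
  using assms(2,3)
proof (induction S rule: finite_induct)
  case empty
  then show ?case using WEnd_zero[OF s] by (simp add: wsum_def)
next
  case (insert i S)
  have "wsum S F \<in> W n" using insert by (intro W_wsum) auto
  then show ?case using insert s by (simp add: wsum_insert WEnd_wadd)
qed

lemma WEnd_wword_eqI:
  assumes s: "s \<in> WEnd n" and s': "s' \<in> WEnd n"
    and agree: "\<And>i. i < n \<Longrightarrow> s (wvar i) = s' (wvar i)"
  shows "set w \<subseteq> {..<n} \<Longrightarrow> s (wword w) = s' (wword w)"
proof (induction w)
  case Nil
  then show ?case using s s' by (simp add: WEnd_one flip: wconst_one_eq_wword)
next
  case (Cons a w)
  have split: "wword (a # w) = wmult (wvar a) (wword w)"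
    by (simp add: wvar_eq_wword wmult_wword)
  have factors: "wvar a \<in> W n" "wword w \<in> W n"
    using Cons.prems by (auto intro: W_wvar W_wword)
  have "s (wword (a # w)) = wmult (s (wvar a)) (s (wword w))"
    unfolding split by (rule WEnd_wmult[OF s factors])
  moreover have "s' (wword (a # w)) = wmult (s' (wvar a)) (s' (wword w))"
    unfolding split by (rule WEnd_wmult[OF s' factors])
  ultimately show ?case using Cons agree by simp
qed

lemma WEnd_eqI:
  assumes s: "s \<in> WEnd n" and s': "s' \<in> WEnd n"
    and agree: "\<And>i. i < n \<Longrightarrow> s (wvar i) = s' (wvar i)" and f: "f \<in> W n"
  shows "s f = s' f"
proof -
  have fin: "finite (supp f)" and letters: "\<And>w. w \<in> supp f \<Longrightarrow> set w \<subseteq> {..<n}"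
    using f by (auto simp: W_iff)
  have terms: "\<And>w. w \<in> supp f \<Longrightarrow> wsmult (f w) (wword w) \<in> W n"
    using letters by (intro W_wsmult W_wword) auto
  have "s f = wsum (supp f) (\<lambda>w. s (wsmult (f w) (wword w)))"
    by (subst wword_expansion[OF fin order_refl]) (rule WEnd_wsum[OF s fin terms])
  also have "\<dots> = wsum (supp f) (\<lambda>w. s' (wsmult (f w) (wword w)))"
  proof (rule wsum_cong)
    fix w assume w: "w \<in> supp f"
    have "wword w \<in> W n" using letters[OF w] by (rule W_wword)
    then show "s (wsmult (f w) (wword w)) = s' (wsmult (f w) (wword w))"
      using WEnd_wsmult[OF s] WEnd_wsmult[OF s'] WEnd_wword_eqI[OF s s' agree letters[OF w]] by metis
  qed
  also have "\<dots> = s' f"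
    by (subst (2) wword_expansion[OF fin order_refl]) (rule WEnd_wsum[OF s' fin terms, symmetric])
  finally show ?thesis .
qed

section \<open>Evaluation at scalars and univariate elements\<close>

definition weval :: "('a::field) walg \<Rightarrow> 'a \<Rightarrow> 'a" where
  "weval f b = (\<Sum>w\<in>supp f. f w * b ^ length w)"

lemma wprod_wconst: "wprod (\<lambda>_. wconst b) w = wconst (b ^ length w)"
  by (induction w) (simp_all add: wmult_wconst)

lemma wsubst_wconst_eq_weval: "wsubst (\<lambda>_. wconst b) f = wconst (weval f b)"
  unfolding wsubst_def weval_def wprod_wconst
  by (auto simp: wsum_def wsmult_def wconst_def sum_distrib_left intro!: ext)

definition poly_of_walg :: "('a::field) walg \<Rightarrow> 'a poly" where
  "poly_of_walg f = (\<Sum>w\<in>supp f. monom (f w) (length w))"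

lemma poly_poly_of_walg: "poly (poly_of_walg f) b = weval f b"
  by (simp add: poly_of_walg_def weval_def poly_sum poly_monom)

definition univariate :: "('a::field) walg \<Rightarrow> bool" where
  "univariate f \<longleftrightarrow> (\<forall>w\<in>supp f. set w \<subseteq> {0})"

lemma coeff_poly_of_walg:
  assumes "univariate f" "finite (supp f)"
  shows "coeff (poly_of_walg f) k = f (replicate k 0)"
proof -
  have "coeff (poly_of_walg f) k = (\<Sum>w\<in>supp f. if w = replicate k 0 then f w else 0)"
    unfolding poly_of_walg_def coeff_sum
  proof (intro sum.cong refl)
    fix w assume "w \<in> supp f"
    then have "w = replicate (length w) 0"
      using assms(1) by (metis univariate_def replicate_length_same singletonD subset_eq)
    then show "coeff (monom (f w) (length w)) k = (if w = replicate k 0 then f w else 0)"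
      by (metis coeff_monom length_replicate)
  qed
  also have "\<dots> = f (replicate k 0)"
    using assms(2) by (auto simp: supp_def)
  finally show ?thesis .
qed

lemma univariate_eqI:
  assumes inf: "infinite (UNIV :: ('a::field) set)"
    and f: "univariate f" "finite (supp f)" and g: "univariate g" "finite (supp g)"
    and eval: "\<And>b. weval f b = weval g (b::'a)"
  shows "f = g"
proof
  fix w
  have "{x. poly (poly_of_walg f - poly_of_walg g) x = 0} = UNIV"
    using eval by (simp add: poly_poly_of_walg)
  then have "poly_of_walg f - poly_of_walg g = 0"
    using inf poly_roots_finite by metis
  then have "poly_of_walg f = poly_of_walg g" by simp
  show "f w = g w"
  proof (cases "set w \<subseteq> {0}")
    case True
    then have "w = replicate (length w) 0"
      by (metis replicate_length_same singletonD subset_eq)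
    then show ?thesis
      using coeff_poly_of_walg[OF f, of "length w"] coeff_poly_of_walg[OF g, of "length w"]
        \<open>poly_of_walg f = poly_of_walg g\<close> by metis
  next
    case False
    then have "w \<notin> supp f" "w \<notin> supp g"
      using f g by (auto simp: univariate_def)
    then show ?thesis by (simp add: supp_def)
  qed
qed

lemma univariate_if_W_le_1: "n \<le> 1 \<Longrightarrow> f \<in> W n \<Longrightarrow> univariate f"
  by (fastforce simp: univariate_def W_iff)

lemma wprod_wvar_0: "wprod (\<lambda>_. wvar 0) w = wword (replicate (length w) 0)"
  by (induction w) (simp_all add: wconst_one_eq_wword wvar_eq_wword wmult_wword)

lemma univariate_wsubst_wvar_0: "univariate (wsubst (\<lambda>_. wvar 0) f)"
  unfolding univariate_def
proof
  fix w assume "w \<in> supp (wsubst (\<lambda>_. wvar 0) f)"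
  then obtain v where "w \<in> supp (wsmult (f v) (wword (replicate (length v) 0)))"
    using supp_wsum unfolding wsubst_def wprod_wvar_0 by blast
  then show "set w \<subseteq> {0}"
    by (auto simp: supp_def wsmult_def wword_def split: if_splits)
qed

lemma wsubst_wvar_0_univariate:
  assumes "univariate f" "finite (supp f)"
  shows "wsubst (\<lambda>_. wvar 0) f = f"
proof -
  have wprod_eq: "wprod (\<lambda>_. wvar 0) w = wword w" if "w \<in> supp f" for w
    using assms(1) that unfolding wprod_wvar_0 univariate_def
    by (metis replicate_length_same singletonD subset_eq)
  have "wsubst (\<lambda>_. wvar 0) f = wsum (supp f) (\<lambda>w. wsmult (f w) (wword w))"
    unfolding wsubst_def by (rule wsum_cong) (metis wprod_eq)
  then show ?thesis
    using wword_expansion[OF assms(2) order_refl] by simp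
qed

definition scale_letter :: "nat \<Rightarrow> 'a \<Rightarrow> ('a::field) walg \<Rightarrow> 'a walg" where
  "scale_letter j c f = (\<lambda>w. c ^ count_list w j * f w)"

lemma wprod_scale_letter:
  "wprod (\<lambda>i. if i = j then wsmult c (wvar i) else wvar i) w = wsmult (c ^ count_list w j) (wword w)"
  by (induction w) (simp_all add: wconst_one_eq_wword wvar_eq_wword wmult_wsmult_left
      wmult_wsmult_right wmult_wword wsmult_wsmult mult.commute)

lemma wsubst_scale_letter:
  assumes "finite (supp f)"
  shows "wsubst (\<lambda>i. if i = j then wsmult c (wvar i) else wvar i) f = scale_letter j c f"
proof
  fix x
  have "wsubst (\<lambda>i. if i = j then wsmult c (wvar i) else wvar i) f x
      = (\<Sum>w\<in>supp f. if x = w then c ^ count_list w j * f w else 0)"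
    unfolding wsubst_def wprod_scale_letter wsum_def
    by (intro sum.cong) (auto simp: wsmult_def wword_def)
  also have "\<dots> = scale_letter j c f x"
    using assms by (auto simp: supp_def scale_letter_def)
  finally show "wsubst (\<lambda>i. if i = j then wsmult c (wvar i) else wvar i) f x = scale_letter j c f x" .
qed

lemma count_list_01_cases:
  fixes w :: "nat list"
  assumes "set w \<subseteq> {0, 1}" "count_list w 0 = 1" "count_list w 1 = 1"
  shows "w = [0, 1] \<or> w = [1, 0]"
proof -
  have "length w = count_list w 0 + count_list w 1"
    using assms(1) by (induction w) auto
  then have "length w = 2" using assms(2,3) by simp
  then obtain a b where w: "w = [a, b]"
    by (metis One_nat_def Suc_1 length_0_conv length_Suc_conv)
  show ?thesis
    using assms unfolding w by (auto split: if_splits)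
qed

lemma power_eq_self_imp_one:
  assumes inf: "infinite (UNIV :: ('a::field) set)" and pow: "\<And>c::'a. c ^ k = c"
  shows "k = 1"
proof (rule ccontr)
  assume k: "k \<noteq> 1"
  have "k \<noteq> 0" using pow[of 0] by auto
  let ?p = "monom (1::'a) k - monom 1 1"
  have "coeff ?p k = 1" using k by (simp add: coeff_monom)
  then have "?p \<noteq> 0" by (metis coeff_0 zero_neq_one)
  then have "finite {x. poly ?p x = 0}" by (rule poly_roots_finite)
  moreover have "{x. poly ?p x = 0} = UNIV" using pow by (auto simp: poly_monom)
  ultimately show False using inf by simp
qed

section \<open>Bijections inducing an automorphism of End(W(X))\<close>

locale walg_conjugation =
  fixes n :: nat and \<mu> :: "('a::field) walg \<Rightarrow> 'a walg"
  assumes infinite_field: "infinite (UNIV :: 'a set)"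
    and bij: "bij_betw \<mu> (W n) (W n)"
    and conj: "\<forall>s\<in>WEnd n. (\<lambda>f. \<mu> (s (the_inv_into (W n) \<mu> f))) \<in> WEnd n"
    and fix_wconst: "\<And>a. \<mu> (wconst a) = wconst a"
    and fix_wvar: "\<And>i. i < n \<Longrightarrow> \<mu> (wvar i) = wvar i"
begin

lemma W_mu: "f \<in> W n \<Longrightarrow> \<mu> f \<in> W n"
  using bij by (auto dest: bij_betwE)

lemma mu_wsubst:
  assumes u: "\<And>i. i < n \<Longrightarrow> u i \<in> W n" and f: "f \<in> W n"
  shows "\<mu> (wsubst u f) = wsubst (\<lambda>i. \<mu> (u i)) (\<mu> f)"
proof -
  \<comment> \<open>\<open>?s\<close> is the conjugate of \<open>wsubst u\<close>; as \<open>\<mu>\<close> fixes the generators, it agrees with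
    \<open>wsubst (\<mu> \<circ> u)\<close> on them\<close>
  let ?s = "\<lambda>g. \<mu> (wsubst u (the_inv_into (W n) \<mu> g))"
  have inj: "inj_on \<mu> (W n)" using bij by (simp add: bij_betw_def)
  have "wsubst u \<in> WEnd n" using u by (rule wsubst_in_WEnd)
  then have s: "?s \<in> WEnd n" using conj by blast
  have s': "wsubst (\<lambda>i. \<mu> (u i)) \<in> WEnd n" using u by (intro wsubst_in_WEnd W_mu)
  have "?s (wvar i) = wsubst (\<lambda>i. \<mu> (u i)) (wvar i)" if "i < n" for i
  proof -
    have "the_inv_into (W n) \<mu> (wvar i) = wvar i"
      using that by (intro the_inv_into_f_eq[OF inj]) (auto simp: fix_wvar W_wvar)
    then show ?thesis by (simp add: wsubst_wvar)
  qed
  then have "?s (\<mu> f) = wsubst (\<lambda>i. \<mu> (u i)) (\<mu> f)"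
    by (rule WEnd_eqI[OF s s' _ W_mu[OF f]])
  then show ?thesis by (simp add: the_inv_into_f_f[OF inj f])
qed

lemma weval_mu:
  assumes "f \<in> W n"
  shows "weval (\<mu> f) b = weval f b"
proof -
  have "wconst (weval f b) = \<mu> (wsubst (\<lambda>_. wconst b) f)"
    by (simp add: wsubst_wconst_eq_weval fix_wconst)
  also have "\<dots> = wsubst (\<lambda>_. wconst b) (\<mu> f)"
    using assms by (simp add: mu_wsubst W_wconst fix_wconst)
  also have "\<dots> = wconst (weval (\<mu> f) b)"
    by (rule wsubst_wconst_eq_weval)
  finally show ?thesis by (auto dest: wconst_inject)
qed

lemma mu_univariate:
  assumes f: "f \<in> W n" and "univariate f"
  shows "\<mu> f = f"
proof (rule univariate_eqI[OF infinite_field])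
  have "\<mu> f = \<mu> (wsubst (\<lambda>_. wvar 0) f)"
    using assms by (simp add: wsubst_wvar_0_univariate finite_supp_W)
  also have "\<dots> = wsubst (\<lambda>_. \<mu> (wvar 0)) (\<mu> f)"
    using f by (intro mu_wsubst) (auto intro: W_wvar)
  also have "\<dots> = wsubst (\<lambda>_. wvar 0) (\<mu> f)"
    by (rule wsubst_cong[OF W_mu[OF f]]) (auto simp: fix_wvar)
  finally show "univariate (\<mu> f)"
    by (metis univariate_wsubst_wvar_0)
  show "finite (supp (\<mu> f))" "finite (supp f)"
    using f W_mu[OF f] by (simp_all add: finite_supp_W)
  show "weval (\<mu> f) b = weval f b" for b
    using f by (rule weval_mu)
qed fact

lemma mu_wsmult_wvar:
  assumes "i < n"
  shows "\<mu> (wsmult c (wvar i)) = wsmult c (wvar i)"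
proof -
  have x0: "wvar 0 \<in> W n" using assms by (intro W_wvar) simp
  have fixed: "\<mu> (wsmult c (wvar 0)) = wsmult c (wvar 0)"
    using x0 by (intro mu_univariate W_wsmult)
      (auto simp: univariate_def supp_def wsmult_def wvar_def)
  have "\<mu> (wsmult c (wvar i)) = \<mu> (wsubst (\<lambda>_. wvar i) (wsmult c (wvar 0)))"
    by (simp add: wsubst_wsmult_wvar)
  also have "\<dots> = wsubst (\<lambda>_. wvar i) (\<mu> (wsmult c (wvar 0)))"
    using assms x0 by (simp add: mu_wsubst W_wsmult W_wvar fix_wvar)
  also have "\<dots> = wsmult c (wvar i)"
    by (simp add: fixed wsubst_wsmult_wvar)
  finally show ?thesis .
qed

lemma mu_wsmult:
  assumes "0 < n" "f \<in> W n"
  shows "\<mu> (wsmult c f) = wsmult c (\<mu> f)"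
proof -
  have "\<mu> (wsmult c f) = \<mu> (wsubst (\<lambda>_. f) (wsmult c (wvar 0)))"
    by (simp add: wsubst_wsmult_wvar)
  also have "\<dots> = wsubst (\<lambda>_. \<mu> f) (\<mu> (wsmult c (wvar 0)))"
    using assms by (simp add: mu_wsubst W_wsmult W_wvar)
  finally show ?thesis
    using assms by (simp add: mu_wsmult_wvar wsubst_wsmult_wvar)
qed

lemma mu_scale_letter:
  assumes f: "f \<in> W n"
  shows "\<mu> (scale_letter j c f) = scale_letter j c (\<mu> f)"
proof -
  let ?u = "\<lambda>i. if i = j then wsmult c (wvar i) else wvar i"
  have u: "?u i \<in> W n" if "i < n" for i
    using that by (simp add: W_wsmult W_wvar)
  have "\<mu> (scale_letter j c f) = \<mu> (wsubst ?u f)"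
    using f by (simp add: wsubst_scale_letter finite_supp_W)
  also have "\<dots> = wsubst (\<lambda>i. \<mu> (?u i)) (\<mu> f)"
    using u f by (rule mu_wsubst)
  also have "\<dots> = wsubst ?u (\<mu> f)"
    by (rule wsubst_cong[OF W_mu[OF f]]) (simp add: mu_wsmult_wvar fix_wvar)
  finally show ?thesis
    by (simp add: wsubst_scale_letter[OF finite_supp_W[OF W_mu[OF f]]])
qed

end

locale walg_conjugation_2 = walg_conjugation +
  assumes two_le_n: "2 \<le> n"
begin

lemma W_wword_01: "wword [0, 1] \<in> W n"
  using two_le_n by (intro W_wword) auto

lemma mu_wword_01_supp:
  assumes "\<mu> (wword [0, 1]) w \<noteq> 0"
  shows "w = [0, 1] \<or> w = [1, 0]"
proof -
  define t where "t = \<mu> (wword [0, 1])"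
  have tw: "t w \<noteq> 0" using assms by (simp add: t_def)
  have "count_list w j = 0" if "j \<notin> {0, 1}" for j
  proof -
    have "scale_letter j 0 (wword [0, 1]) = wword [0, 1]"
      using that by (auto simp: scale_letter_def wword_def)
    then have "t = scale_letter j 0 t"
      unfolding t_def by (metis mu_scale_letter W_wword_01)
    then have "t w = 0 ^ count_list w j * t w"
      by (metis scale_letter_def)
    then show ?thesis using tw by (cases "count_list w j") auto
  qed
  then have "set w \<subseteq> {0, 1}"
    by (metis count_list_0_iff subsetI)
  moreover have "count_list w j = 1" if "j \<in> {0, 1}" for j
  proof (rule power_eq_self_imp_one[OF infinite_field])
    fix c :: 'a
    have "scale_letter j c (wword [0, 1]) = wsmult c (wword [0, 1])"
      using that by (auto simp: scale_letter_def wword_def wsmult_def)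
    moreover have "0 < n" using two_le_n by simp
    ultimately have "wsmult c t = scale_letter j c t"
      unfolding t_def by (metis mu_scale_letter mu_wsmult W_wword_01)
    then have "c * t w = c ^ count_list w j * t w"
      by (metis scale_letter_def wsmult_def)
    then show "c ^ count_list w j = c" using tw by simp
  qed
  ultimately show ?thesis by (intro count_list_01_cases) auto
qed

lemma mu_wword_01:
  "\<mu> (wword [0, 1]) = wadd (wsmult (\<mu> (wword [0, 1]) [0, 1]) (wword [0, 1]))
                           (wsmult (\<mu> (wword [0, 1]) [1, 0]) (wword [1, 0]))"
proof
  fix w
  show "\<mu> (wword [0, 1]) w = wadd (wsmult (\<mu> (wword [0, 1]) [0, 1]) (wword [0, 1]))
                                 (wsmult (\<mu> (wword [0, 1]) [1, 0]) (wword [1, 0])) w"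
    using mu_wword_01_supp[of w]
    by (cases "\<mu> (wword [0, 1]) w = 0") (auto simp: wadd_def wsmult_def wword_def)
qed

lemma mu_wmult_combination:
  obtains \<beta> \<gamma> where "\<And>u v. u \<in> W n \<Longrightarrow> v \<in> W n \<Longrightarrow>
    \<mu> (wmult u v) = wadd (wsmult \<beta> (wmult (\<mu> u) (\<mu> v))) (wsmult \<gamma> (wmult (\<mu> v) (\<mu> u)))"
proof -
  define \<beta> where "\<beta> = \<mu> (wword [0, 1]) [0, 1]"
  define \<gamma> where "\<gamma> = \<mu> (wword [0, 1]) [1, 0]"
  have t: "\<mu> (wword [0, 1]) = wadd (wsmult \<beta> (wword [0, 1])) (wsmult \<gamma> (wword [1, 0]))"
    unfolding \<beta>_def \<gamma>_def by (rule mu_wword_01)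
  have "\<mu> (wmult u v) = wadd (wsmult \<beta> (wmult (\<mu> u) (\<mu> v))) (wsmult \<gamma> (wmult (\<mu> v) (\<mu> u)))"
    if "u \<in> W n" "v \<in> W n" for u v
  proof -
    let ?u = "\<lambda>i. if i = 0 then u else if i = 1 then v else wvar i"
    have "\<mu> (wmult u v) = \<mu> (wsubst ?u (wword [0, 1]))"
      by (simp add: wsubst_wword_pair)
    also have "\<dots> = wsubst (\<lambda>i. \<mu> (?u i)) (\<mu> (wword [0, 1]))"
      using that by (intro mu_wsubst W_wword_01) (simp add: W_wvar)
    finally show ?thesis
      unfolding t by (simp add: wsubst_wadd wsubst_wsmult wsubst_wword_pair supp_wword
          finite_supp_wsmult)
  qed
  then show thesis by (rule that)
qed

lemma mu_wmult_combination_coeffs: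
  assumes comb: "\<And>u v. u \<in> W n \<Longrightarrow> v \<in> W n \<Longrightarrow>
    \<mu> (wmult u v) = wadd (wsmult \<beta> (wmult (\<mu> u) (\<mu> v))) (wsmult \<gamma> (wmult (\<mu> v) (\<mu> u)))"
  shows "(\<beta> = 1 \<and> \<gamma> = 0) \<or> (\<beta> = 0 \<and> \<gamma> = 1)"
proof -
  have lt: "0 < n" "1 < n" using two_le_n by auto
  have x0: "wvar 0 \<in> W n" and x1: "wvar 1 \<in> W n"
    using lt by (auto intro: W_wvar)
  have "wconst 1 = wsmult (\<beta> + \<gamma>) (wconst (1::'a))"
    using comb[OF W_wconst W_wconst, of 1 1]
    by (simp add: fix_wconst wmult_one_left wadd_wsmult_same)
  then have coeff_sum: "\<beta> + \<gamma> = 1"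
    by (metis wconst_def wsmult_def mult.right_neutral)
  let ?x11 = "wmult (wvar 1) (wvar 1)"
  have x11: "\<mu> ?x11 = ?x11"
    using comb[OF x1 x1] lt by (simp add: fix_wvar wadd_wsmult_same coeff_sum)
  have "\<mu> (wmult (wvar 0) ?x11)
      = wadd (wsmult \<beta> (wmult (wvar 0) ?x11)) (wsmult \<gamma> (wmult ?x11 (wvar 0)))"
    using comb[OF x0 W_wmult[OF x1 x1]] lt x11 by (simp add: fix_wvar)
  then have "\<mu> (wmult (wvar 0) ?x11) [0, 1, 1] = \<beta>"
    by (simp add: wvar_eq_wword wmult_wword) (simp add: wadd_def wsmult_def wword_def)
  moreover have "\<mu> (wmult (wvar 0) (wvar 1))
      = wadd (wsmult \<beta> (wmult (wvar 0) (wvar 1))) (wsmult \<gamma> (wmult (wvar 1) (wvar 0)))"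
    using comb[OF x0 x1] lt by (simp add: fix_wvar)
  moreover have "\<mu> (wmult (wvar 0) ?x11)
      = wadd (wsmult \<beta> (wmult (\<mu> (wmult (wvar 0) (wvar 1))) (wvar 1)))
             (wsmult \<gamma> (wmult (wvar 1) (\<mu> (wmult (wvar 0) (wvar 1)))))"
    using comb[OF W_wmult[OF x0 x1] x1] lt by (simp add: fix_wvar wmult_assoc)
  ultimately have "\<beta> * \<beta> = \<beta>"
    by (simp add: wmult_wadd_left wmult_wadd_right wmult_wsmult_left wmult_wsmult_right
        wvar_eq_wword wmult_wword) (simp add: wadd_def wsmult_def wword_def)
  then have "\<beta> = 0 \<or> \<beta> = 1"
    by (metis mult_cancel_right1 mult_zero_left)
  then show ?thesis using coeff_sum by auto
qed

end

theorem lemma4p2: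
  fixes n :: nat and \<mu> :: "('a::field) walg \<Rightarrow> 'a walg"
  assumes inf: "infinite (UNIV :: 'a set)"
    and bij: "bij_betw \<mu> (W n) (W n)"
    and conj: "\<forall>s\<in>WEnd n. (\<lambda>f. \<mu> (s (the_inv_into (W n) \<mu> f))) \<in> WEnd n"
    and conj_inv: "\<forall>s\<in>WEnd n. (\<lambda>f. the_inv_into (W n) \<mu> (s (\<mu> f))) \<in> WEnd n"
    and fixc: "\<forall>a::'a. \<mu> (wconst a) = wconst a"
    and fixx: "\<forall>i<n. \<mu> (wvar i) = wvar i"
  shows "(\<forall>u\<in>W n. \<forall>v\<in>W n. \<mu> (wmult u v) = wmult (\<mu> u) (\<mu> v))
       \<or> (\<forall>u\<in>W n. \<forall>v\<in>W n. \<mu> (wmult u v) = wmult (\<mu> v) (\<mu> u))"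
proof -
  \<comment> \<open>only conjugation by \<open>\<mu>\<close> itself is needed\<close>
  interpret walg_conjugation n \<mu>
    using inf bij conj fixc fixx by unfold_locales auto
  show ?thesis
  proof (cases "n \<le> 1")
    case True
    then have "\<mu> f = f" if "f \<in> W n" for f
      using that by (simp add: mu_univariate univariate_if_W_le_1)
    then show ?thesis by (simp add: W_wmult)
  next
    case False
    then interpret walg_conjugation_2 n \<mu>
      by unfold_locales simp
    obtain \<beta> \<gamma> where comb: "\<And>u v. u \<in> W n \<Longrightarrow> v \<in> W n \<Longrightarrow>
      \<mu> (wmult u v) = wadd (wsmult \<beta> (wmult (\<mu> u) (\<mu> v))) (wsmult \<gamma> (wmult (\<mu> v) (\<mu> u)))"
      using mu_wmult_combination by blast
    with mu_wmult_combination_coeffs[OF comb] show ?thesis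
      by (auto simp: wadd_def wsmult_def)
  qed
qed

end
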